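(* Let $\gamma\geq0$ and $G=(V,E,\omega)\in\mathcal C_\gamma$. Define, for $i,j\in V$, $\tilde\omega_{ij}:=-d_j^r\sum_{m=1}^{n-1}\Lambda_m\phi^m_i\phi^m_j$ if $i\neq j$ and $\tilde\omega_{ii}:=0$. Then $\tilde\omega_{ij}\geq0$ for all $i,j\in V$, and $\omega_{ij}>0$ implies $\tilde\omega_{ij}>0$. If, additionally, $G\in\mathcal C$, then $\tilde\omega_{ij}\geq d_i^{-r}\omega_{ij}$ for all $i,j\in V$.
   Context: $\mathcal{G}$ is the set of finite, simple, connected, undirected, edge-weighted graphs $G=(V,E,\omega)$ with $V=\{1,\dots,n\}$, $n\geq2$, weights $\omega_{ij}=\omega_{ji}>0$ on edges, $0$ otherwise. $d_i=\sum_j\omega_{ij}$. $\mathcal V$: functions $V\to\mathbb R$. Fixed $r\in[0,1]$: $\langle u,v\rangle_{\mathcal V}=\sum_id_i^ru_iv_i$, $(\Delta u)_i=d_i^{-r}\sum_j\omega_{ij}(u_i-u_j)$, $\mathcal M(u)=\sum_id_i^ru_i$, $\mathrm{vol}(V)=\sum_id_i^r$, $\mathcal A(u)=\frac{\mathcal M(u)}{\mathrm{vol}(V)}\chi_V$. $0=\lambda_0<\lambda_1\leq\dots\leq\lambda_{n-1}$: eigenvalues of $\Delta$ with $\langle\cdot,\cdot\rangle_{\mathcal V}$-orthonormal eigenfunctions $\phi^0=\mathrm{vol}(V)^{-1/2}\chi_V,\phi^1,\dots,\phi^{n-1}$; $\Lambda_m=\lambda_m+\gamma/\lambda_m$ for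 $m\geq1$. Equilibrium measure $\nu^S$ ($S\subsetneq V$): unique $\nu\in\mathcal V$ with $(\Delta\nu)_i=1$ on $S$, $\nu=0$ off $S$. $f^j:=\nu^{V\setminus\{j\}}-\mathcal A(\nu^{V\setminus\{j\}})$. $\mathcal C=\{G\in\mathcal G:\forall j\ \forall i\neq j:\ f^j_i\geq0\}$; $\mathcal C^0=\{G\in\mathcal G:\forall j\ \forall i\neq j:\ \omega_{ij}>0\text{ or }f^j_i\geq0\}$; for $\gamma>0$, $\mathcal C_\gamma=\{G\in\mathcal C^0:\forall j\ \forall i\neq j:\ \omega_{ij}=0\text{ or }d_i^{-r}\omega_{ij}+\gamma\frac{d_j^r}{\mathrm{vol}(V)}f^j_i>0\}$; $\mathcal C_0:=\mathcal G$. *)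

theory Defs
  imports Complex_Main
begin

text \<open>A weighted graph on V = {1..n} is given by n and a weight function w.
  Vertex functions are functions nat => real (only values on V matter, except
  where stated).\<close>

definition verts :: "nat \<Rightarrow> nat set" where
  "verts n = {1..n}"

definition wgraph :: "nat \<Rightarrow> (nat \<Rightarrow> nat \<Rightarrow> real) \<Rightarrow> bool" where
  "wgraph n w \<longleftrightarrow> n \<ge> 2
     \<and> (\<forall>i\<in>verts n. \<forall>j\<in>verts n. w i j = w j i \<and> w i j \<ge> 0)
     \<and> (\<forall>i\<in>verts n. w i i = 0)
     \<and> (\<forall>i\<in>verts n. \<forall>j\<in>verts n.
          (i, j) \<in> {(a, b). a \<in> verts n \<and> b \<in> verts n \<and> w a b > 0}\<^sup>*)"

definition deg :: "nat \<Rightarrow> (nat \<Rightarrow> nat \<Rightarrow> real) \<Rightarrow> nat \<Rightarrow> real" where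
  "deg n w i = (\<Sum>j\<in>verts n. w i j)"

definition vinner :: "nat \<Rightarrow> (nat \<Rightarrow> nat \<Rightarrow> real) \<Rightarrow> real \<Rightarrow> (nat \<Rightarrow> real) \<Rightarrow> (nat \<Rightarrow> real) \<Rightarrow> real" where
  "vinner n w r u v = (\<Sum>i\<in>verts n. deg n w i powr r * u i * v i)"

definition glap :: "nat \<Rightarrow> (nat \<Rightarrow> nat \<Rightarrow> real) \<Rightarrow> real \<Rightarrow> (nat \<Rightarrow> real) \<Rightarrow> nat \<Rightarrow> real" where
  "glap n w r u i = deg n w i powr (-r) * (\<Sum>j\<in>verts n. w i j * (u i - u j))"

definition gmass :: "nat \<Rightarrow> (nat \<Rightarrow> nat \<Rightarrow> real) \<Rightarrow> real \<Rightarrow> (nat \<Rightarrow> real) \<Rightarrow> real" where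
  "gmass n w r u = (\<Sum>i\<in>verts n. deg n w i powr r * u i)"

definition gvol :: "nat \<Rightarrow> (nat \<Rightarrow> nat \<Rightarrow> real) \<Rightarrow> real \<Rightarrow> real" where
  "gvol n w r = (\<Sum>i\<in>verts n. deg n w i powr r)"

definition gavg :: "nat \<Rightarrow> (nat \<Rightarrow> nat \<Rightarrow> real) \<Rightarrow> real \<Rightarrow> (nat \<Rightarrow> real) \<Rightarrow> nat \<Rightarrow> real" where
  "gavg n w r u i = (if i \<in> verts n then gmass n w r u / gvol n w r else 0)"

definition eqmeas :: "nat \<Rightarrow> (nat \<Rightarrow> nat \<Rightarrow> real) \<Rightarrow> real \<Rightarrow> nat set \<Rightarrow> nat \<Rightarrow> real" where
  "eqmeas n w r S = (THE \<nu>. (\<forall>i\<in>S. glap n w r \<nu> i = 1) \<and> (\<forall>i. i \<notin> S \<longrightarrow> \<nu> i = 0))"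

definition fj :: "nat \<Rightarrow> (nat \<Rightarrow> nat \<Rightarrow> real) \<Rightarrow> real \<Rightarrow> nat \<Rightarrow> nat \<Rightarrow> real" where
  "fj n w r j = (\<lambda>i. eqmeas n w r (verts n - {j}) i - gavg n w r (eqmeas n w r (verts n - {j})) i)"

definition classC :: "nat \<Rightarrow> (nat \<Rightarrow> nat \<Rightarrow> real) \<Rightarrow> real \<Rightarrow> bool" where
  "classC n w r \<longleftrightarrow> wgraph n w \<and>
     (\<forall>j\<in>verts n. \<forall>i\<in>verts n. i \<noteq> j \<longrightarrow> fj n w r j i \<ge> 0)"

definition classC0 :: "nat \<Rightarrow> (nat \<Rightarrow> nat \<Rightarrow> real) \<Rightarrow> real \<Rightarrow> bool" where
  "classC0 n w r \<longleftrightarrow> wgraph n w \<and>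
     (\<forall>j\<in>verts n. \<forall>i\<in>verts n. i \<noteq> j \<longrightarrow> w i j > 0 \<or> fj n w r j i \<ge> 0)"

definition classCg :: "nat \<Rightarrow> (nat \<Rightarrow> nat \<Rightarrow> real) \<Rightarrow> real \<Rightarrow> real \<Rightarrow> bool" where
  "classCg n w r \<gamma> \<longleftrightarrow>
     (if \<gamma> = 0 then wgraph n w
      else classC0 n w r \<and>
        (\<forall>j\<in>verts n. \<forall>i\<in>verts n. i \<noteq> j \<longrightarrow>
           w i j = 0 \<or> deg n w i powr (-r) * w i j
                        + \<gamma> * deg n w j powr r / gvol n w r * fj n w r j i > 0))"

definition eigbasis :: "nat \<Rightarrow> (nat \<Rightarrow> nat \<Rightarrow> real) \<Rightarrow> real \<Rightarrow> (nat \<Rightarrow> real) \<Rightarrow> (nat \<Rightarrow> nat \<Rightarrow> real) \<Rightarrow> bool" where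
  "eigbasis n w r lam phi \<longleftrightarrow>
     (\<forall>m<n. \<forall>i\<in>verts n. glap n w r (phi m) i = lam m * phi m i)
     \<and> (\<forall>m<n. \<forall>k<n. vinner n w r (phi m) (phi k) = (if m = k then 1 else 0))
     \<and> lam 0 = 0 \<and> 0 < lam 1 \<and> (\<forall>m k. 1 \<le> m \<and> m \<le> k \<and> k < n \<longrightarrow> lam m \<le> lam k)
     \<and> (\<forall>i\<in>verts n. phi 0 i = 1 / sqrt (gvol n w r))"

definition wtilde :: "nat \<Rightarrow> (nat \<Rightarrow> nat \<Rightarrow> real) \<Rightarrow> real \<Rightarrow> real \<Rightarrow> (nat \<Rightarrow> real) \<Rightarrow> (nat \<Rightarrow> nat \<Rightarrow> real) \<Rightarrow> nat \<Rightarrow> nat \<Rightarrow> real" where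
  "wtilde n w r \<gamma> lam phi i j =
     (if i = j then 0
      else - (deg n w j powr r * (\<Sum>m\<in>{1..<n}. (lam m + \<gamma> / lam m) * phi m i * phi m j)))"

end

theory Submission
  imports Defs "Jordan_Normal_Form.Determinant"
begin

text \<open>For i \<noteq> j the spectral decomposition of \<Delta> gives
  -d_j^r \<Sum>_{m\<ge>1} \<lambda>_m \<phi>^m_i \<phi>^m_j = d_i^{-r} \<omega>_ij,
  while \<Sum>_{m\<ge>1} \<phi>^m_i \<phi>^m_j d_j^r / \<lambda>_m is a Green function
  g_j with \<Delta> g_j = \<delta>_j - d_j^r/vol(V) and mass zero. Normalising g_j to vanish at j gives,
  up to the factor -vol(V)/d_j^r, the equilibrium measure of V - {j}, and the mass-zero
  condition identifies -d_j^r \<Sum>_{m\<ge>1} \<phi>^m_i \<phi>^m_j / \<lambda>_m with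
  (d_j^r/vol(V)) f^j_i. Hence \<tilde>\<omega>_ij = d_i^{-r} \<omega>_ij + \<gamma> (d_j^r/vol(V)) f^j_i, and all three
  claims are sign considerations on the two summands, which is exactly what the classes
  C, C^0 and C_\<gamma> control.\<close>

lemma orthonormal_imp_complete:
  fixes D :: "nat \<Rightarrow> real" and phi :: "nat \<Rightarrow> nat \<Rightarrow> real"
  assumes ortho: "\<forall>m<n. \<forall>k<n. (\<Sum>i\<in>{1..n}. D i * phi m i * phi k i) = (if m = k then 1 else 0)"
    and i: "i \<in> {1..n}" and j: "j \<in> {1..n}"
  shows "(\<Sum>m<n. phi m i * phi m j * D j) = (if i = j then 1 else 0)"
proof -
  \<comment> \<open>Orthonormality is A * B = 1 for square matrices, so also B * A = 1, which is the claim.\<close>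
  define A where "A = mat n n (\<lambda>(m, a). D (Suc a) * phi m (Suc a))"
  define B where "B = mat n n (\<lambda>(a, m). phi m (Suc a))"
  have "A * B = 1\<^sub>m n"
  proof (rule eq_matI)
    fix m k assume m: "m < dim_row (1\<^sub>m n)" and k: "k < dim_col (1\<^sub>m n)"
    have "(A * B) $$ (m, k) = (\<Sum>a<n. D (Suc a) * phi m (Suc a) * phi k (Suc a))"
      using m k by (auto simp: A_def B_def scalar_prod_def lessThan_atLeast0 intro!: sum.cong)
    also have "\<dots> = (if m = k then 1 else 0)"
      using ortho m k sum.atLeast1_atMost_eq[of "\<lambda>i. D i * phi m i * phi k i" n] by simp
    finally show "(A * B) $$ (m, k) = 1\<^sub>m n $$ (m, k)" using m k by simp
  qed (auto simp: A_def B_def)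
  then have BA: "B * A = 1\<^sub>m n"
    by (rule mat_mult_left_right_inverse[rotated 2]) (auto simp: A_def B_def)
  have "(B * A) $$ (i - 1, j - 1) = (\<Sum>m<n. phi m i * phi m j * D j)"
    using i j by (auto simp: A_def B_def scalar_prod_def lessThan_atLeast0 intro!: sum.cong)
  then show ?thesis using i j by (auto simp: BA split: if_splits)
qed

lemma finite_verts [simp]: "finite (verts n)"
  by (simp add: verts_def)

lemma deg_pos:
  assumes g: "wgraph n w" and i: "i \<in> verts n"
  shows "deg n w i > 0"
proof -
  define R where "R = {(a, b). a \<in> verts n \<and> b \<in> verts n \<and> w a b > 0}"
  define j where "j = (if i = 1 then 2 else (1::nat))"
  have j: "j \<in> verts n" "j \<noteq> i"
    using g i by (auto simp: j_def verts_def wgraph_def)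
  have "(i, j) \<in> R\<^sup>*" using g i j by (simp add: wgraph_def R_def)
  then obtain k where "(i, k) \<in> R"
    using j(2) by (cases rule: converse_rtranclE) auto
  then have "k \<in> verts n" "w i k > 0" by (auto simp: R_def)
  moreover have "\<forall>x\<in>verts n. 0 \<le> w i x" using g i by (simp add: wgraph_def)
  ultimately show ?thesis unfolding deg_def
    by (intro sum_pos2[of _ k]) (auto simp: verts_def)
qed

lemma gvol_pos:
  assumes "wgraph n w"
  shows "gvol n w r > 0"
proof -
  have "1 \<in> verts n" using assms by (simp add: wgraph_def verts_def)
  moreover have "\<forall>i\<in>verts n. deg n w i powr r > 0" using deg_pos[OF assms] by force
  ultimately show ?thesis unfolding gvol_def by (intro sum_pos) (auto simp: verts_def)
qed

lemma glap_cong: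
  assumes "\<forall>x\<in>verts n. u x = v x" and "i \<in> verts n"
  shows "glap n w r u i = glap n w r v i"
  using assms unfolding glap_def by (auto intro!: sum.cong)

lemma glap_scale_add_const: "glap n w r (\<lambda>x. K * u x + c) i = K * glap n w r u i"
  unfolding glap_def by (simp add: sum_distrib_left algebra_simps)

lemma glap_diff: "glap n w r (\<lambda>x. u x - v x) i = glap n w r u i - glap n w r v i"
proof -
  have "(\<Sum>k\<in>verts n. w i k * ((u i - v i) - (u k - v k)))
      = (\<Sum>k\<in>verts n. w i k * (u i - u k)) - (\<Sum>k\<in>verts n. w i k * (v i - v k))"
    by (simp add: sum_subtractf[symmetric] algebra_simps)
  then show ?thesis by (simp add: glap_def right_diff_distrib)
qed

lemma glap_sum:
  assumes "finite M"
  shows "glap n w r (\<lambda>x. \<Sum>m\<in>M. c m * u m x) i = (\<Sum>m\<in>M. c m * glap n w r (u m) i)"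
proof -
  have "(\<Sum>k\<in>verts n. w i k * ((\<Sum>m\<in>M. c m * u m i) - (\<Sum>m\<in>M. c m * u m k)))
      = (\<Sum>k\<in>verts n. \<Sum>m\<in>M. c m * (w i k * (u m i - u m k)))"
    by (simp add: sum_subtractf[symmetric] sum_distrib_left algebra_simps)
  also have "\<dots> = (\<Sum>m\<in>M. c m * (\<Sum>k\<in>verts n. w i k * (u m i - u m k)))"
    by (subst sum.swap) (simp add: sum_distrib_left)
  finally show ?thesis unfolding glap_def by (simp add: sum_distrib_left algebra_simps)
qed

lemma dirichlet_energy_eq:
  fixes w :: "nat \<Rightarrow> nat \<Rightarrow> real" and u :: "nat \<Rightarrow> real"
  assumes "\<forall>i\<in>verts n. \<forall>k\<in>verts n. w i k = w k i"
  shows "(\<Sum>i\<in>verts n. \<Sum>k\<in>verts n. w i k * (u i - u k)\<^sup>2)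
       = 2 * (\<Sum>i\<in>verts n. u i * (\<Sum>k\<in>verts n. w i k * (u i - u k)))"
proof -
  let ?V = "verts n"
  define S where "S = (\<Sum>i\<in>?V. \<Sum>k\<in>?V. w i k * u i * (u i - u k))"
  define S' where "S' = (\<Sum>i\<in>?V. \<Sum>k\<in>?V. w i k * u k * (u k - u i))"
  have "S = (\<Sum>k\<in>?V. \<Sum>i\<in>?V. w i k * u i * (u i - u k))"
    unfolding S_def by (rule sum.swap)
  also have "\<dots> = S'"
    unfolding S'_def using assms by (intro sum.cong refl) auto
  finally have "S = S'" .
  moreover have "S + S' = (\<Sum>i\<in>?V. \<Sum>k\<in>?V. w i k * (u i - u k)\<^sup>2)"
    unfolding S_def S'_def sum.distrib[symmetric]
    by (intro sum.cong refl) (simp add: power2_eq_square algebra_simps)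
  ultimately show ?thesis
    by (simp add: S_def sum_distrib_left algebra_simps)
qed

lemma glap_zero_off_vertex_imp_zero:
  assumes g: "wgraph n w" and j: "j \<in> verts n"
    and harm: "\<forall>i\<in>verts n - {j}. glap n w r u i = 0" and uj: "u j = 0"
  shows "\<forall>i\<in>verts n. u i = 0"
proof -
  let ?V = "verts n"
  have nn: "\<forall>i\<in>?V. \<forall>k\<in>?V. w i k \<ge> 0" using g by (simp add: wgraph_def)
  have row: "u i * (\<Sum>k\<in>?V. w i k * (u i - u k)) = 0" if i: "i \<in> ?V" for i
  proof (cases "i = j")
    case False
    then have "glap n w r u i = 0" using harm i by simp
    then show ?thesis using deg_pos[OF g i] by (simp add: glap_def)
  qed (simp add: uj)
  have "(\<Sum>i\<in>?V. u i * (\<Sum>k\<in>?V. w i k * (u i - u k))) = 0"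
    by (rule sum.neutral) (simp add: row)
  then have energy: "(\<Sum>i\<in>?V. \<Sum>k\<in>?V. w i k * (u i - u k)\<^sup>2) = 0"
    using g by (simp add: dirichlet_energy_eq wgraph_def)
  have terms_nonneg: "\<forall>i\<in>?V. \<forall>k\<in>?V. w i k * (u i - u k)\<^sup>2 \<ge> 0"
    using nn by simp
  then have "\<forall>i\<in>?V. (\<Sum>k\<in>?V. w i k * (u i - u k)\<^sup>2) \<ge> 0"
    by (simp add: sum_nonneg)
  then have rows: "\<forall>i\<in>?V. (\<Sum>k\<in>?V. w i k * (u i - u k)\<^sup>2) = 0"
    using energy sum_nonneg_eq_0_iff[of ?V "\<lambda>i. \<Sum>k\<in>?V. w i k * (u i - u k)\<^sup>2"] by simp
  have flat: "w a b * (u a - u b)\<^sup>2 = 0" if "a \<in> ?V" "b \<in> ?V" for a b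
    using that rows terms_nonneg sum_nonneg_eq_0_iff[of ?V "\<lambda>k. w a k * (u a - u k)\<^sup>2"]
    by simp
  define R where "R = {(a, b). a \<in> ?V \<and> b \<in> ?V \<and> w a b > 0}"
  have edge: "u a = u b" if "(a, b) \<in> R" for a b
    using that flat[of a b] by (auto simp: R_def)
  show ?thesis
  proof
    fix i assume "i \<in> ?V"
    then have "(j, i) \<in> R\<^sup>*" using g j by (simp add: wgraph_def R_def)
    then have "u i = u j" by (induction rule: rtrancl_induct) (auto dest: edge)
    then show "u i = 0" using uj by simp
  qed
qed

lemma eqmeas_complement_vertex_eqI:
  assumes g: "wgraph n w" and j: "j \<in> verts n"
    and lap: "\<forall>x\<in>verts n - {j}. glap n w r \<nu> x = 1"
    and supp: "\<forall>x. x \<notin> verts n - {j} \<longrightarrow> \<nu> x = 0"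
  shows "eqmeas n w r (verts n - {j}) = \<nu>"
  unfolding eqmeas_def
proof (rule the_equality)
  fix \<mu>
  assume \<mu>: "(\<forall>x\<in>verts n - {j}. glap n w r \<mu> x = 1) \<and> (\<forall>x. x \<notin> verts n - {j} \<longrightarrow> \<mu> x = 0)"
  have "\<forall>x\<in>verts n - {j}. glap n w r (\<lambda>y. \<mu> y - \<nu> y) x = 0"
    using \<mu> lap by (simp add: glap_diff)
  then have diff_zero: "\<forall>x\<in>verts n. \<mu> x - \<nu> x = 0"
    using \<mu> supp by (intro glap_zero_off_vertex_imp_zero[OF g j]) auto
  show "\<mu> = \<nu>"
  proof
    fix x
    show "\<mu> x = \<nu> x"
      using diff_zero \<mu> supp by (cases "x \<in> verts n") auto
  qed
qed (use lap supp in blast)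

locale graph_eigenbasis =
  fixes n :: nat and w :: "nat \<Rightarrow> nat \<Rightarrow> real" and r :: real
    and lam :: "nat \<Rightarrow> real" and phi :: "nat \<Rightarrow> nat \<Rightarrow> real"
  assumes wgraph: "wgraph n w" and eigbasis: "eigbasis n w r lam phi"
begin

lemma vol_pos: "gvol n w r > 0"
  using gvol_pos[OF wgraph] .

lemma glap_phi: "m < n \<Longrightarrow> x \<in> verts n \<Longrightarrow> glap n w r (phi m) x = lam m * phi m x"
  using eigbasis by (simp add: eigbasis_def)

lemma phi0: "x \<in> verts n \<Longrightarrow> phi 0 x = 1 / sqrt (gvol n w r)"
  using eigbasis by (simp add: eigbasis_def)

lemma lam0: "lam 0 = 0"
  using eigbasis by (simp add: eigbasis_def)

lemma lam_pos: "m \<in> {1..<n} \<Longrightarrow> lam m > 0"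
  using eigbasis unfolding eigbasis_def by (metis atLeastLessThan_iff less_le_trans order_refl)

lemma lam_nonzero: "m \<in> {1..<n} \<Longrightarrow> lam m \<noteq> 0"
  using lam_pos by force

lemma vinner_phi: "m < n \<Longrightarrow> k < n \<Longrightarrow> vinner n w r (phi m) (phi k) = (if m = k then 1 else 0)"
  using eigbasis by (simp add: eigbasis_def)

lemma sum_lessThan_split_first:
  "(\<Sum>m<n. f m) = f 0 + (\<Sum>m\<in>{1..<n}. f m)"
  using wgraph by (simp add: wgraph_def lessThan_atLeast0 sum.atLeast_Suc_lessThan)

lemma eigen_complete:
  assumes "a \<in> verts n" and "b \<in> verts n"
  shows "(\<Sum>m<n. phi m a * phi m b * deg n w b powr r) = (if a = b then 1 else 0)"
  using orthonormal_imp_complete[of n "\<lambda>x. deg n w x powr r" phi a b] vinner_phi assms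
  by (simp add: vinner_def verts_def)

lemma gmass_phi: "m \<in> {1..<n} \<Longrightarrow> gmass n w r (phi m) = 0"
proof -
  assume m: "m \<in> {1..<n}"
  have "vinner n w r (phi 0) (phi m) = 0" using vinner_phi m by auto
  then have "(\<Sum>x\<in>verts n. deg n w x powr r * (1 / sqrt (gvol n w r)) * phi m x) = 0"
    unfolding vinner_def by (simp add: phi0 cong: sum.cong)
  then have "1 / sqrt (gvol n w r) * gmass n w r (phi m) = 0"
    by (simp add: gmass_def sum_distrib_left algebra_simps)
  then show ?thesis using vol_pos by force
qed

lemma spectral_offdiag:
  assumes i: "i \<in> verts n" and j: "j \<in> verts n" and ij: "i \<noteq> j"
  shows "- (deg n w j powr r * (\<Sum>m\<in>{1..<n}. lam m * phi m i * phi m j))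
    = deg n w i powr (-r) * w i j"
proof -
  let ?dj = "deg n w j powr r"
  have "?dj * (\<Sum>m\<in>{1..<n}. lam m * phi m i * phi m j)
      = (\<Sum>m<n. glap n w r (phi m) i * (phi m j * ?dj))"
    using i by (simp add: sum_lessThan_split_first lam0 sum_distrib_left glap_phi algebra_simps)
  also have "\<dots> = deg n w i powr (-r) * (\<Sum>k\<in>verts n. w i k *
      ((\<Sum>m<n. phi m i * phi m j * ?dj) - (\<Sum>m<n. phi m k * phi m j * ?dj)))"
    by (simp add: glap_def sum_distrib_left sum_distrib_right sum_subtractf[symmetric]
        algebra_simps sum.swap[of _ "{..<n}"])
  also have "\<dots> = deg n w i powr (-r) * (\<Sum>k\<in>verts n. - (w i k * (if k = j then 1 else 0)))"
    using eigen_complete i j ij by (intro arg_cong[where f = "\<lambda>x. _ * x"] sum.cong refl) auto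
  also have "\<dots> = - (deg n w i powr (-r) * w i j)"
    using j by (simp add: sum_negf if_distrib cong: if_cong)
  finally show ?thesis by simp
qed

definition green :: "nat \<Rightarrow> nat \<Rightarrow> real" where
  "green j x = (\<Sum>m\<in>{1..<n}. phi m x * phi m j * deg n w j powr r / lam m)"

lemma glap_green:
  assumes j: "j \<in> verts n" and x: "x \<in> verts n"
  shows "glap n w r (green j) x = (if x = j then 1 else 0) - deg n w j powr r / gvol n w r"
proof -
  let ?dj = "deg n w j powr r"
  have "glap n w r (green j) x = (\<Sum>m\<in>{1..<n}. phi m j * ?dj / lam m * glap n w r (phi m) x)"
    using glap_sum[of "{1..<n}" n w r "\<lambda>m. phi m j * ?dj / lam m" phi x]
    by (simp add: green_def[abs_def] algebra_simps)
  also have "\<dots> = (\<Sum>m\<in>{1..<n}. phi m x * phi m j * ?dj)"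
    using x by (intro sum.cong refl) (simp add: glap_phi lam_nonzero)
  also have "\<dots> = (\<Sum>m<n. phi m x * phi m j * ?dj) - phi 0 x * phi 0 j * ?dj"
    by (simp add: sum_lessThan_split_first)
  also have "\<dots> = (if x = j then 1 else 0) - ?dj / gvol n w r"
    using eigen_complete[OF x j] phi0 x j vol_pos
    by (simp add: power2_eq_square real_sqrt_mult[symmetric])
  finally show ?thesis .
qed

lemma gmass_green: "gmass n w r (green j) = 0"
proof -
  have "gmass n w r (green j)
      = (\<Sum>m\<in>{1..<n}. phi m j * deg n w j powr r / lam m * gmass n w r (phi m))"
    by (simp add: gmass_def green_def sum_distrib_left sum.swap[of _ "verts n"] algebra_simps)
  then show ?thesis by (simp add: gmass_phi)
qed

lemma eqmeas_green:
  assumes j: "j \<in> verts n"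
  defines "K \<equiv> - gvol n w r / deg n w j powr r"
  shows "eqmeas n w r (verts n - {j})
    = (\<lambda>x. if x \<in> verts n - {j} then K * (green j x - green j j) else 0)"
    (is "_ = ?\<nu>")
proof (rule eqmeas_complement_vertex_eqI[OF wgraph j], intro ballI)
  fix x assume x: "x \<in> verts n - {j}"
  have "glap n w r ?\<nu> x = glap n w r (\<lambda>x. K * green j x + (- K * green j j)) x"
    using x by (intro glap_cong) (auto simp: algebra_simps)
  also have "\<dots> = K * glap n w r (green j) x"
    by (rule glap_scale_add_const)
  also have "\<dots> = 1"
    using x glap_green[OF j, of x] deg_pos[OF wgraph j] vol_pos by (simp add: K_def)
  finally show "glap n w r ?\<nu> x = 1" .
qed simp

lemma fj_green:
  assumes j: "j \<in> verts n" and i: "i \<in> verts n"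
  shows "fj n w r j i = - gvol n w r / deg n w j powr r * green j i"
proof -
  define K where "K = - gvol n w r / deg n w j powr r"
  have \<nu>: "eqmeas n w r (verts n - {j}) x = K * green j x - K * green j j" if "x \<in> verts n" for x
    using that by (simp add: eqmeas_green[OF j] K_def algebra_simps)
  have "gmass n w r (eqmeas n w r (verts n - {j}))
      = K * gmass n w r (green j) - K * green j j * gvol n w r"
    by (simp add: gmass_def gvol_def \<nu> sum_subtractf sum_distrib_left algebra_simps cong: sum.cong)
  then have "gmass n w r (eqmeas n w r (verts n - {j})) / gvol n w r = - K * green j j"
    using vol_pos by (simp add: gmass_green)
  then show ?thesis using i by (simp add: fj_def gavg_def \<nu> K_def)
qed

lemma wtilde_offdiag:
  assumes i: "i \<in> verts n" and j: "j \<in> verts n" and ij: "i \<noteq> j"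
  shows "wtilde n w r \<gamma> lam phi i j
    = deg n w i powr (-r) * w i j + \<gamma> * deg n w j powr r / gvol n w r * fj n w r j i"
proof -
  have "wtilde n w r \<gamma> lam phi i j
      = - (deg n w j powr r * (\<Sum>m\<in>{1..<n}. lam m * phi m i * phi m j)) - \<gamma> * green j i"
    using ij
    by (simp add: wtilde_def green_def sum.distrib distrib_right sum_distrib_left
        sum_distrib_right algebra_simps)
  then show ?thesis
    using spectral_offdiag[OF i j ij] fj_green[OF j i] deg_pos[OF wgraph j] vol_pos
    by (simp add: field_simps)
qed

lemma wtilde_ge_if_fj_nonneg:
  assumes "\<gamma> \<ge> 0" and i: "i \<in> verts n" and j: "j \<in> verts n" and ij: "i \<noteq> j"
    and "fj n w r j i \<ge> 0"
  shows "wtilde n w r \<gamma> lam phi i j \<ge> deg n w i powr (-r) * w i j"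
proof -
  have "\<gamma> * deg n w j powr r / gvol n w r * fj n w r j i \<ge> 0"
    using assms vol_pos by simp
  then show ?thesis by (simp add: wtilde_offdiag[OF i j ij])
qed

lemma wtilde_sign_if_classCg:
  assumes \<gamma>: "\<gamma> \<ge> 0" and C\<gamma>: "classCg n w r \<gamma>"
    and i: "i \<in> verts n" and j: "j \<in> verts n" and ij: "i \<noteq> j"
  shows "wtilde n w r \<gamma> lam phi i j \<ge> 0 \<and> (w i j > 0 \<longrightarrow> wtilde n w r \<gamma> lam phi i j > 0)"
proof -
  have "w i j \<ge> 0" using wgraph i j by (simp add: wgraph_def)
  moreover have "deg n w i powr (-r) > 0" using deg_pos[OF wgraph i] by simp
  ultimately have edge_term: "deg n w i powr (-r) * w i j \<ge> 0"
    "w i j > 0 \<Longrightarrow> deg n w i powr (-r) * w i j > 0"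
    by simp_all
  consider "\<gamma> = 0" | "\<gamma> > 0" "w i j > 0" | "\<gamma> > 0" "w i j = 0"
    using \<gamma> \<open>w i j \<ge> 0\<close> by linarith
  then show ?thesis
  proof cases
    case 1
    then show ?thesis using edge_term by (simp add: wtilde_offdiag[OF i j ij])
  next
    case 2
    then have "\<forall>j\<in>verts n. \<forall>i\<in>verts n. i \<noteq> j \<longrightarrow> w i j = 0
        \<or> deg n w i powr (-r) * w i j + \<gamma> * deg n w j powr r / gvol n w r * fj n w r j i > 0"
      using C\<gamma> unfolding classCg_def by simp
    then have "deg n w i powr (-r) * w i j
        + \<gamma> * deg n w j powr r / gvol n w r * fj n w r j i > 0"
      using i j ij 2 by force
    then show ?thesis by (simp add: wtilde_offdiag[OF i j ij] 2)
  next
    case 3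
    then have "\<forall>j\<in>verts n. \<forall>i\<in>verts n. i \<noteq> j \<longrightarrow> w i j > 0 \<or> fj n w r j i \<ge> 0"
      using C\<gamma> by (simp add: classCg_def classC0_def)
    then have "fj n w r j i \<ge> 0"
      using i j ij 3 by force
    then show ?thesis
      using wtilde_ge_if_fj_nonneg[OF \<gamma> i j ij] 3 by simp
  qed
qed

end

theorem lemma6p14:
  fixes n :: nat and w :: "nat \<Rightarrow> nat \<Rightarrow> real" and r \<gamma> :: real
    and lam :: "nat \<Rightarrow> real" and phi :: "nat \<Rightarrow> nat \<Rightarrow> real"
  assumes "0 \<le> r" and "r \<le> 1" and "\<gamma> \<ge> 0"
    and "wgraph n w" and "classCg n w r \<gamma>"
    and "eigbasis n w r lam phi"
  shows "(\<forall>i\<in>verts n. \<forall>j\<in>verts n. wtilde n w r \<gamma> lam phi i j \<ge> 0)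
       \<and> (\<forall>i\<in>verts n. \<forall>j\<in>verts n. w i j > 0 \<longrightarrow> wtilde n w r \<gamma> lam phi i j > 0)
       \<and> (classC n w r \<longrightarrow>
           (\<forall>i\<in>verts n. \<forall>j\<in>verts n.
              wtilde n w r \<gamma> lam phi i j \<ge> deg n w i powr (-r) * w i j))"
proof -
  interpret graph_eigenbasis n w r lam phi
    using assms(4,6) by unfold_locales
  have diag: "wtilde n w r \<gamma> lam phi i i = 0" "w i i = 0" if "i \<in> verts n" for i
    using assms(4) that by (simp_all add: wtilde_def wgraph_def)
  have "wtilde n w r \<gamma> lam phi i j \<ge> 0 \<and> (w i j > 0 \<longrightarrow> wtilde n w r \<gamma> lam phi i j > 0)"
    if "i \<in> verts n" "j \<in> verts n" for i j
    using wtilde_sign_if_classCg[OF assms(3,5) that] diag that by (cases "i = j") auto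
  moreover have "wtilde n w r \<gamma> lam phi i j \<ge> deg n w i powr (-r) * w i j"
    if "classC n w r" "i \<in> verts n" "j \<in> verts n" for i j
    using that assms(3) diag wtilde_ge_if_fj_nonneg
    by (cases "i = j") (auto simp: classC_def)
  ultimately show ?thesis by blast
qed

end
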